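(* Let $n\ge 7$ and let $CU_n$ be the set of chemical unicyclic graphs on $n$ vertices. Define the following subsets of $CU_n$ (in each, all $m_{i,j}$ not listed are $0$): $\alpha_1$: $n_2=n$ (all vertices of degree 2) and $m_{2,2}=n$; $\alpha_2$: $n_4=0,n_3=1,n_2=n-2,n_1=1$, $m_{1,3}=1$, $m_{2,3}=2$, $m_{2,2}=n-3$; $\alpha_3$: $n_4=0,n_3=1,n_2=n-2,n_1=1$, $m_{1,2}=1$, $m_{2,3}=3$, $m_{2,2}=n-4$; $\alpha_9$: $n_4=0,n_3=2,n_2=n-4,n_1=2$, $m_{1,2}=2$, $m_{2,3}=4$, $m_{3,3}=1$, $m_{2,2}=n-7$. Let $G_1\in\alpha_1$, $G_2\in\alpha_3$, $G_3\in\alpha_2$, $G_4\in\alpha_9$, and let $G\in CU_n$ not belong to $\alpha_1\cup\alpha_2\cup\alpha_3\cup\alpha_9$. Then $SO(G_1)<SO(G_2)<SO(G_3)<SO(G_4)<SO(G)$.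
   Context: All graphs are simple and connected. A chemical graph is a graph with maximum degree at most $4$; a unicyclic graph is a connected graph with $n$ vertices and $n$ edges. $d_G(u)$ is the degree of $u$, $n_i$ the number of vertices of degree $i$, and $m_{i,j}$ the number of edges joining a vertex of degree $i$ to a vertex of degree $j$. The Sombor index is $SO(G)=\sum_{uv\in E(G)}\sqrt{d_G(u)^2+d_G(v)^2}$. *)

theory Defs
  imports Complex_Main
begin

definition simple_graph :: "'a set \<Rightarrow> 'a set set \<Rightarrow> bool" where
  "simple_graph V E \<longleftrightarrow> finite V \<and>
     (\<forall>e\<in>E. \<exists>u v. u \<in> V \<and> v \<in> V \<and> u \<noteq> v \<and> e = {u, v})"

definition adj :: "'a set set \<Rightarrow> 'a \<Rightarrow> 'a \<Rightarrow> bool" where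
  "adj E u v \<longleftrightarrow> {u, v} \<in> E"

definition connected_graph :: "'a set \<Rightarrow> 'a set set \<Rightarrow> bool" where
  "connected_graph V E \<longleftrightarrow> simple_graph V E \<and> V \<noteq> {} \<and>
     (\<forall>u\<in>V. \<forall>v\<in>V. (adj E)\<^sup>*\<^sup>* u v)"

definition deg :: "'a set set \<Rightarrow> 'a \<Rightarrow> nat" where
  "deg E v = card {e \<in> E. v \<in> e}"

definition chemical :: "'a set \<Rightarrow> 'a set set \<Rightarrow> bool" where
  "chemical V E \<longleftrightarrow> (\<forall>v\<in>V. deg E v \<le> 4)"

definition chem_unicyclic :: "nat \<Rightarrow> 'a set \<Rightarrow> 'a set set \<Rightarrow> bool" where
  "chem_unicyclic n V E \<longleftrightarrow> connected_graph V E \<and> card V = n \<and> card E = n \<and>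
     chemical V E"

definition nv :: "'a set \<Rightarrow> 'a set set \<Rightarrow> nat \<Rightarrow> nat" where
  "nv V E i = card {v \<in> V. deg E v = i}"

definition me :: "'a set set \<Rightarrow> nat \<Rightarrow> nat \<Rightarrow> nat" where
  "me E i j = card {e \<in> E. \<exists>u v. e = {u, v} \<and> u \<noteq> v \<and> deg E u = i \<and> deg E v = j}"

text \<open>Sombor index: for an edge e = {u,v}, the sum over w in e of d(w)^2 is
  d(u)^2 + d(v)^2.\<close>
definition sombor :: "'a set set \<Rightarrow> real" where
  "sombor E = (\<Sum>e\<in>E. sqrt (\<Sum>w\<in>e. real (deg E w) ^ 2))"

definition others_zero :: "'a set set \<Rightarrow> (nat \<times> nat) set \<Rightarrow> bool" where
  "others_zero E L \<longleftrightarrow> (\<forall>i j. i \<le> j \<longrightarrow> (i, j) \<notin> L \<longrightarrow> me E i j = 0)"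

definition alpha1 :: "nat \<Rightarrow> 'a set \<Rightarrow> 'a set set \<Rightarrow> bool" where
  "alpha1 n V E \<longleftrightarrow> chem_unicyclic n V E \<and> nv V E 2 = n \<and> me E 2 2 = n \<and>
     others_zero E {(2,2)}"

definition alpha2 :: "nat \<Rightarrow> 'a set \<Rightarrow> 'a set set \<Rightarrow> bool" where
  "alpha2 n V E \<longleftrightarrow> chem_unicyclic n V E \<and>
     nv V E 4 = 0 \<and> nv V E 3 = 1 \<and> nv V E 2 = n - 2 \<and> nv V E 1 = 1 \<and>
     me E 1 3 = 1 \<and> me E 2 3 = 2 \<and> me E 2 2 = n - 3 \<and>
     others_zero E {(1,3), (2,3), (2,2)}"

definition alpha3 :: "nat \<Rightarrow> 'a set \<Rightarrow> 'a set set \<Rightarrow> bool" where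
  "alpha3 n V E \<longleftrightarrow> chem_unicyclic n V E \<and>
     nv V E 4 = 0 \<and> nv V E 3 = 1 \<and> nv V E 2 = n - 2 \<and> nv V E 1 = 1 \<and>
     me E 1 2 = 1 \<and> me E 2 3 = 3 \<and> me E 2 2 = n - 4 \<and>
     others_zero E {(1,2), (2,3), (2,2)}"

definition alpha9 :: "nat \<Rightarrow> 'a set \<Rightarrow> 'a set set \<Rightarrow> bool" where
  "alpha9 n V E \<longleftrightarrow> chem_unicyclic n V E \<and>
     nv V E 4 = 0 \<and> nv V E 3 = 2 \<and> nv V E 2 = n - 4 \<and> nv V E 1 = 2 \<and>
     me E 1 2 = 2 \<and> me E 2 3 = 4 \<and> me E 3 3 = 1 \<and> me E 2 2 = n - 7 \<and>
     others_zero E {(1,2), (2,3), (3,3), (2,2)}"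

end

theory Submission
  imports Defs
begin

text \<open>
  Write x_ij = sqrt (i^2 + j^2) - sqrt 8 for the excess of an edge whose end degrees are i <= j
  over an edge between two vertices of degree 2. A unicyclic graph has n edges, so
  SO(G) = n sqrt 8 + sum of m_ij x_ij, and the four extremal classes have excess 0,
  x_12 + 3 x_23, x_13 + 2 x_23 and 2 x_12 + 4 x_23 + x_33 (about 3.34), in increasing order.

  For an arbitrary G, no edge joins two leaves once n >= 3, and every other excess satisfies
  x_ij >= p_i + p_j for the vertex potential p = (-3/5, 0, 7/10, 7/5). Summing over the edges,
  the handshake identities and n_1 = n_3 + 2 n_4 (as many edges as vertices) give
  SO(G) >= n sqrt 8 + 3/2 n_3 + 22/5 n_4, which beats the alpha_9 value unless n_4 = 0 and
  n_3 <= 2. Then n_1 = n_3, and the handshake identities leave only the profiles of alpha_1,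
  alpha_2, alpha_3, alpha_9 and, for n_3 = 2, profiles whose excess exceeds that of alpha_9 by
  (1 - m_33) (2 x_23 - x_33) + m_13 (x_13 - x_12 - x_23) > 0.
\<close>

definition edge_type :: "'a set set \<Rightarrow> 'a set \<Rightarrow> nat \<times> nat" where
  "edge_type E e = (Min (deg E ` e), Max (deg E ` e))"

lemma edge_type_doubleton:
  "edge_type E {u, v} = (min (deg E u) (deg E v), max (deg E u) (deg E v))"
  by (simp add: edge_type_def)

definition chem_edge_types :: "(nat \<times> nat) set" where
  "chem_edge_types = {(1,1), (1,2), (1,3), (1,4), (2,2), (2,3), (2,4), (3,3), (3,4), (4,4)}"

lemma chem_edge_typeI:
  assumes "1 \<le> i" "i \<le> j" "j \<le> (4::nat)"
  shows "(i, j) \<in> chem_edge_types"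
proof -
  have "i = 1 \<or> i = 2 \<or> i = 3 \<or> i = 4" "j = 1 \<or> j = 2 \<or> j = 3 \<or> j = 4"
    using assms by linarith+
  then show ?thesis
    using assms(2) unfolding chem_edge_types_def by (elim disjE) simp_all
qed

lemma card_eq_sum_nv:
  assumes "finite V" "finite D" "\<And>v. v \<in> V \<Longrightarrow> deg E v \<in> D"
  shows "card V = (\<Sum>d\<in>D. nv V E d)"
proof -
  have "(\<Sum>d\<in>D. \<Sum>v\<in>{v. v \<in> V \<and> deg E v = d}. 1) = (\<Sum>v\<in>V. 1::nat)"
    using assms by (intro sum.group) auto
  then show ?thesis
    by (simp add: nv_def)
qed

locale graph =
  fixes V :: "'a set" and E :: "'a set set"
  assumes simple: "simple_graph V E"
begin

lemma edgeE:
  assumes "e \<in> E"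
  obtains u v where "u \<in> V" "v \<in> V" "u \<noteq> v" "e = {u, v}"
  using simple assms by (auto simp: simple_graph_def)

lemma finite_vertices: "finite V"
  using simple by (simp add: simple_graph_def)

lemma finite_edges: "finite E"
proof -
  have "E \<subseteq> Pow V"
    by (auto elim: edgeE)
  then show ?thesis
    using finite_vertices by (meson finite_Pow_iff finite_subset)
qed

lemma deg_pos_of_edge: "e \<in> E \<Longrightarrow> v \<in> e \<Longrightarrow> 0 < deg E v"
  using finite_edges by (auto simp: deg_def card_gt_0_iff)

lemma me_eq_card_edge_type:
  assumes "i \<le> j"
  shows "me E i j = card {e \<in> E. edge_type E e = (i, j)}"
proof -
  have "(\<exists>u v. e = {u, v} \<and> u \<noteq> v \<and> deg E u = i \<and> deg E v = j) \<longleftrightarrow>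
      edge_type E e = (i, j)"
    if "e \<in> E" for e
  proof -
    obtain u v where "u \<noteq> v" "e = {u, v}"
      using \<open>e \<in> E\<close> by (rule edgeE)
    then show ?thesis
      using assms by (auto simp: edge_type_doubleton min_def max_def insert_commute doubleton_eq_iff)
  qed
  then have "{e \<in> E. \<exists>u v. e = {u, v} \<and> u \<noteq> v \<and> deg E u = i \<and> deg E v = j} =
      {e \<in> E. edge_type E e = (i, j)}"
    by blast
  then show ?thesis
    by (simp add: me_def)
qed

lemma sum_edge_ends:
  assumes "e \<in> E"
  shows "(\<Sum>w\<in>e. f (deg E w)) = f (fst (edge_type E e)) + f (snd (edge_type E e))"
proof -
  obtain u v where "u \<noteq> v" "e = {u, v}"
    using assms by (rule edgeE)
  then show ?thesis
    by (auto simp: edge_type_doubleton min_def max_def add.commute)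
qed

lemma sum_edges_sum_ends:
  "(\<Sum>e\<in>E. \<Sum>w\<in>e. f w) = (\<Sum>v\<in>V. of_nat (deg E v) * f v)"
proof -
  have "(\<Sum>w\<in>e. f w) = (\<Sum>v\<in>V. if v \<in> e then f v else 0)" if "e \<in> E" for e
  proof -
    have "e \<subseteq> V"
      using that by (auto elim: edgeE)
    then show ?thesis
      using finite_vertices by (simp add: sum.inter_restrict[symmetric] Int_absorb1 Int_absorb2)
  qed
  then have "(\<Sum>e\<in>E. \<Sum>w\<in>e. f w) = (\<Sum>e\<in>E. \<Sum>v\<in>V. if v \<in> e then f v else 0)"
    by (rule sum.cong[OF refl])
  also have "\<dots> = (\<Sum>v\<in>V. \<Sum>e\<in>E. if v \<in> e then f v else 0)"
    by (rule sum.swap)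
  also have "\<dots> = (\<Sum>v\<in>V. of_nat (deg E v) * f v)"
    using finite_edges by (simp add: sum.If_cases deg_def Int_def)
  finally show ?thesis .
qed

lemma me_diag_le_choose: "me E d d \<le> nv V E d choose 2"
proof -
  let ?S = "{v \<in> V. deg E v = d}"
  have "{e \<in> E. edge_type E e = (d, d)} \<subseteq> {B. B \<subseteq> ?S \<and> card B = 2}"
    by (auto simp: edge_type_doubleton min_def max_def split: if_splits elim!: edgeE)
  then have "card {e \<in> E. edge_type E e = (d, d)} \<le> card {B. B \<subseteq> ?S \<and> card B = 2}"
    using finite_vertices by (intro card_mono) auto
  also have "\<dots> = nv V E d choose 2"
    using finite_vertices by (simp add: n_subsets nv_def)
  finally show ?thesis
    by (simp add: me_eq_card_edge_type)
qed

lemma reachable_from_leaf_edge: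
  assumes e: "{u, v} \<in> E" and leaves: "deg E u = 1" "deg E v = 1"
    and reach: "(adj E)\<^sup>*\<^sup>* u w"
  shows "w \<in> {u, v}"
  using reach
proof (induction rule: rtranclp_induct)
  case base
  then show ?case by simp
next
  case (step y z)
  have "deg E y = 1"
    using step.IH leaves by auto
  then obtain x where "{x \<in> E. y \<in> x} = {x}"
    unfolding deg_def by (rule card_1_singletonE)
  moreover have "{y, z} \<in> {x \<in> E. y \<in> x}" "{u, v} \<in> {x \<in> E. y \<in> x}"
    using step e by (auto simp: adj_def)
  ultimately have "{y, z} = {u, v}"
    by simp
  then show ?case
    by (metis insertCI)
qed

lemma connected_deg_pos:
  assumes "connected_graph V E" "2 \<le> card V" "v \<in> V"
  shows "0 < deg E v"
proof -
  have "V \<noteq> {v}"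
    using assms(2) by auto
  then obtain w where "w \<in> V" "w \<noteq> v"
    using assms(3) by blast
  then have "(adj E)\<^sup>*\<^sup>* v w"
    using assms(1,3) by (auto simp: connected_graph_def)
  then obtain z where "adj E v z"
    using \<open>w \<noteq> v\<close> by (cases rule: converse_rtranclpE) auto
  then show ?thesis
    using deg_pos_of_edge by (auto simp: adj_def)
qed

lemma connected_me_1_1_eq_0:
  assumes "connected_graph V E" "3 \<le> card V"
  shows "me E 1 1 = 0"
proof (rule ccontr)
  assume "me E 1 1 \<noteq> 0"
  then have "{e \<in> E. \<exists>u v. e = {u, v} \<and> u \<noteq> v \<and> deg E u = 1 \<and> deg E v = 1} \<noteq> {}"
    unfolding me_def by (metis card.empty)
  then obtain u v where e: "{u, v} \<in> E" "deg E u = 1" "deg E v = 1"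
    by blast
  obtain a b where "a \<in> V" "b \<in> V" "a \<noteq> b" "{u, v} = {a, b}"
    using e(1) by (rule edgeE)
  then have "u \<in> V"
    by (auto simp: doubleton_eq_iff)
  have "V \<subseteq> {u, v}"
  proof
    fix w
    assume "w \<in> V"
    then have "(adj E)\<^sup>*\<^sup>* u w"
      using assms(1) \<open>u \<in> V\<close> by (simp add: connected_graph_def)
    then show "w \<in> {u, v}"
      by (rule reachable_from_leaf_edge[OF e])
  qed
  then have "card V \<le> card {u, v}"
    by (simp add: card_mono)
  also have "\<dots> \<le> 2"
    by (cases "u = v") simp_all
  finally show False
    using assms(2) by simp
qed

end

definition sombor_excess :: "nat \<Rightarrow> nat \<Rightarrow> real" where
  "sombor_excess i j = sqrt (real i ^ 2 + real j ^ 2) - sqrt 8"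

locale chemical_graph = graph +
  assumes chemical: "chemical V E"
begin

lemma edge_type_mem:
  assumes "e \<in> E"
  shows "edge_type E e \<in> chem_edge_types"
proof -
  obtain u v where "u \<in> V" "v \<in> V" "e = {u, v}"
    using assms by (rule edgeE)
  moreover have "0 < deg E u" "0 < deg E v"
    using assms \<open>e = {u, v}\<close> deg_pos_of_edge by auto
  ultimately show ?thesis
    using chemical by (auto simp: edge_type_doubleton chemical_def intro!: chem_edge_typeI)
qed

lemma me_eq_0_outside:
  assumes "i \<le> j" "(i, j) \<notin> chem_edge_types"
  shows "me E i j = 0"
proof -
  have "{e \<in> E. edge_type E e = (i, j)} = {}"
    using assms(2) edge_type_mem by force
  then show ?thesis
    using me_eq_card_edge_type[OF assms(1)] by (metis card.empty)
qed

lemma others_zeroI: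
  "(\<And>i j. (i, j) \<in> chem_edge_types \<Longrightarrow> (i, j) \<notin> L \<Longrightarrow> me E i j = 0) \<Longrightarrow>
    others_zero E L"
  using me_eq_0_outside by (auto simp: others_zero_def)

lemma sum_edges_by_type:
  "(\<Sum>e\<in>E. F (edge_type E e)) = (\<Sum>(i, j)\<in>chem_edge_types. of_nat (me E i j) * F (i, j))"
proof -
  have "(\<Sum>e\<in>E. F (edge_type E e)) =
      (\<Sum>p\<in>chem_edge_types. \<Sum>e\<in>{e \<in> E. edge_type E e = p}. F (edge_type E e))"
  proof (rule sum.group[symmetric, OF finite_edges])
    show "finite chem_edge_types"
      by (simp add: chem_edge_types_def)
    show "edge_type E ` E \<subseteq> chem_edge_types"
      using edge_type_mem by blast
  qed
  also have "\<dots> = (\<Sum>(i, j)\<in>chem_edge_types. of_nat (me E i j) * F (i, j))"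
  proof (intro sum.cong refl, clarify)
    fix i j assume "(i, j) \<in> chem_edge_types"
    then have "i \<le> j"
      by (auto simp: chem_edge_types_def)
    then have "me E i j = card {e \<in> E. edge_type E e = (i, j)}"
      by (rule me_eq_card_edge_type)
    moreover have "(\<Sum>e\<in>{e \<in> E. edge_type E e = (i, j)}. F (edge_type E e)) =
        (\<Sum>e\<in>{e \<in> E. edge_type E e = (i, j)}. F (i, j))"
      by (rule sum.cong) auto
    ultimately show "(\<Sum>e\<in>{e \<in> E. edge_type E e = (i, j)}. F (edge_type E e)) =
        of_nat (me E i j) * F (i, j)"
      by simp
  qed
  finally show ?thesis .
qed

lemma card_edges_by_type:
  "card E = me E 1 1 + me E 1 2 + me E 1 3 + me E 1 4 + me E 2 2 + me E 2 3 + me E 2 4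
    + me E 3 3 + me E 3 4 + me E 4 4"
  using sum_edges_by_type[of "\<lambda>_. 1 :: nat"] by (simp add: chem_edge_types_def)

lemma degree_count_by_type:
  "d * nv V E d =
    (\<Sum>(i, j)\<in>chem_edge_types. me E i j * ((if i = d then 1 else 0) + (if j = d then 1 else 0)))"
proof -
  have "d * nv V E d = (\<Sum>v\<in>V. if deg E v = d then d else 0)"
    using finite_vertices by (simp add: nv_def sum.inter_filter[symmetric])
  also have "\<dots> = (\<Sum>v\<in>V. deg E v * (if deg E v = d then 1 else 0))"
    by (rule sum.cong) auto
  also have "\<dots> = (\<Sum>e\<in>E. \<Sum>w\<in>e. if deg E w = d then 1 else 0)"
    by (simp add: sum_edges_sum_ends)
  also have "\<dots> = (\<Sum>e\<in>E. (if fst (edge_type E e) = d then 1 else 0)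
      + (if snd (edge_type E e) = d then 1 else 0))"
    by (intro sum.cong refl sum_edge_ends)
  also have "\<dots> =
      (\<Sum>(i, j)\<in>chem_edge_types. me E i j * ((if i = d then 1 else 0) + (if j = d then 1 else 0)))"
    using sum_edges_by_type[of "\<lambda>(i, j). (if i = d then 1 else 0) + (if j = d then 1 else 0 :: nat)"]
    by (simp add: case_prod_beta)
  finally show ?thesis .
qed

lemma degree_counts_by_type:
  "nv V E 1 = 2 * me E 1 1 + me E 1 2 + me E 1 3 + me E 1 4"
  "2 * nv V E 2 = me E 1 2 + 2 * me E 2 2 + me E 2 3 + me E 2 4"
  "3 * nv V E 3 = me E 1 3 + me E 2 3 + 2 * me E 3 3 + me E 3 4"
  "4 * nv V E 4 = me E 1 4 + me E 2 4 + me E 3 4 + 2 * me E 4 4"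
  using degree_count_by_type[of 1] degree_count_by_type[of 2] degree_count_by_type[of 3]
    degree_count_by_type[of 4]
  by (simp_all add: chem_edge_types_def)

lemma sombor_by_type:
  "sombor E = (\<Sum>(i, j)\<in>chem_edge_types. real (me E i j) * sqrt (real i ^ 2 + real j ^ 2))"
proof -
  have "sombor E = (\<Sum>e\<in>E. sqrt (real (fst (edge_type E e)) ^ 2 + real (snd (edge_type E e)) ^ 2))"
    unfolding sombor_def by (intro sum.cong refl) (simp add: sum_edge_ends[of _ "\<lambda>d. real d ^ 2"])
  then show ?thesis
    using sum_edges_by_type[of "\<lambda>(i, j). sqrt (real i ^ 2 + real j ^ 2)"] by (simp add: case_prod_beta)
qed

lemma sombor_eq_excess:
  "sombor E = real (card E) * sqrt 8 + (\<Sum>(i, j)\<in>chem_edge_types. real (me E i j) * sombor_excess i j)"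
proof -
  have "real (card E) = (\<Sum>(i, j)\<in>chem_edge_types. real (me E i j))"
    using sum_edges_by_type[of "\<lambda>_. 1 :: real"] by (simp add: case_prod_beta)
  then show ?thesis
    by (simp add: sombor_by_type sombor_excess_def right_diff_distrib sum_subtractf
        sum_distrib_right case_prod_beta)
qed

end

lemma sombor_excess_2_2 [simp]: "sombor_excess 2 2 = 0"
  by (simp add: sombor_excess_def)

lemma sqrt_numeral_bounds:
  "223/100 \<le> sqrt 5" "sqrt 5 \<le> 224/100"
  "282/100 \<le> sqrt 8" "sqrt 8 \<le> 283/100"
  "316/100 \<le> sqrt 10" "sqrt 10 \<le> 317/100"
  "360/100 \<le> sqrt 13" "sqrt 13 \<le> 361/100"
  "412/100 \<le> sqrt 17"
  "424/100 \<le> sqrt 18" "sqrt 18 \<le> 425/100"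
  "447/100 \<le> sqrt 20"
  "5 \<le> sqrt 25"
  "565/100 \<le> sqrt 32"
  by (rule real_le_rsqrt real_le_lsqrt; simp add: power2_eq_square)+

lemma sombor_excess_lower_bounds:
  "-3/5 \<le> sombor_excess 1 2" "1/10 \<le> sombor_excess 1 3" "4/5 \<le> sombor_excess 1 4"
  "7/10 \<le> sombor_excess 2 3" "7/5 \<le> sombor_excess 2 4" "7/5 \<le> sombor_excess 3 3"
  "21/10 \<le> sombor_excess 3 4" "14/5 \<le> sombor_excess 4 4"
  using sqrt_numeral_bounds by (simp_all add: sombor_excess_def)

lemma sombor_excess_comparisons:
  "0 < sombor_excess 1 2 + 3 * sombor_excess 2 3"
  "sombor_excess 1 2 + sombor_excess 2 3 < sombor_excess 1 3"
  "sombor_excess 1 3 < 2 * sombor_excess 1 2 + 2 * sombor_excess 2 3 + sombor_excess 3 3"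
  "sombor_excess 3 3 < 2 * sombor_excess 2 3"
  "2 * sombor_excess 1 2 + 4 * sombor_excess 2 3 + sombor_excess 3 3 < 22/5"
  using sqrt_numeral_bounds by (simp_all add: sombor_excess_def)

lemma sombor_chem_unicyclic:
  assumes "chem_unicyclic n V E"
  shows "sombor E = real n * sqrt 8 + (\<Sum>(i, j)\<in>chem_edge_types. real (me E i j) * sombor_excess i j)"
proof -
  interpret chemical_graph V E
    using assms by unfold_locales (simp_all add: chem_unicyclic_def connected_graph_def)
  show ?thesis
    using sombor_eq_excess assms by (simp add: chem_unicyclic_def)
qed

lemma sombor_alpha1: "alpha1 n V E \<Longrightarrow> sombor E = real n * sqrt 8"
  using sombor_chem_unicyclic[of n V E]
  by (simp add: alpha1_def others_zero_def chem_edge_types_def)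

lemma sombor_alpha3:
  "alpha3 n V E \<Longrightarrow> sombor E = real n * sqrt 8 + (sombor_excess 1 2 + 3 * sombor_excess 2 3)"
  using sombor_chem_unicyclic[of n V E]
  by (simp add: alpha3_def others_zero_def chem_edge_types_def)

lemma sombor_alpha2:
  "alpha2 n V E \<Longrightarrow> sombor E = real n * sqrt 8 + (sombor_excess 1 3 + 2 * sombor_excess 2 3)"
  using sombor_chem_unicyclic[of n V E]
  by (simp add: alpha2_def others_zero_def chem_edge_types_def)

lemma sombor_alpha9:
  "alpha9 n V E \<Longrightarrow> sombor E =
    real n * sqrt 8 + (2 * sombor_excess 1 2 + 4 * sombor_excess 2 3 + sombor_excess 3 3)"
  using sombor_chem_unicyclic[of n V E]
  by (simp add: alpha9_def others_zero_def chem_edge_types_def)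

locale chemical_unicyclic_graph =
  fixes n :: nat and V :: "'a set" and E :: "'a set set"
  assumes unicyclic: "chem_unicyclic n V E" and order_ge_3: "3 \<le> n"

sublocale chemical_unicyclic_graph \<subseteq> chemical_graph V E
  using unicyclic by unfold_locales (simp_all add: chem_unicyclic_def connected_graph_def)

context chemical_unicyclic_graph
begin

lemma card_vertices: "card V = n" and card_edges: "card E = n"
  using unicyclic by (simp_all add: chem_unicyclic_def)

lemma me_1_1_eq_0: "me E 1 1 = 0"
  using unicyclic order_ge_3 by (intro connected_me_1_1_eq_0) (simp_all add: chem_unicyclic_def)

lemma order_eq_nv_sum: "n = nv V E 1 + nv V E 2 + nv V E 3 + nv V E 4"
proof -
  have "deg E v \<in> {1, 2, 3, 4}" if "v \<in> V" for v
  proof -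
    have "0 < deg E v"
      using unicyclic order_ge_3 that by (intro connected_deg_pos) (auto simp: chem_unicyclic_def)
    moreover have "deg E v \<le> 4"
      using chemical that by (simp add: chemical_def)
    ultimately show ?thesis by auto
  qed
  then show ?thesis
    using card_eq_sum_nv[of V "{1, 2, 3, 4}" E] finite_vertices card_vertices by (simp add: add.assoc)
qed

lemma leaves_eq: "nv V E 1 = nv V E 3 + 2 * nv V E 4"
  using degree_counts_by_type card_edges_by_type card_edges order_eq_nv_sum me_1_1_eq_0 by linarith

lemma sombor_eq:
  "sombor E = real n * sqrt 8 + real (me E 1 2) * sombor_excess 1 2
    + real (me E 1 3) * sombor_excess 1 3 + real (me E 1 4) * sombor_excess 1 4
    + real (me E 2 3) * sombor_excess 2 3 + real (me E 2 4) * sombor_excess 2 4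
    + real (me E 3 3) * sombor_excess 3 3 + real (me E 3 4) * sombor_excess 3 4
    + real (me E 4 4) * sombor_excess 4 4"
  using sombor_chem_unicyclic[OF unicyclic] me_1_1_eq_0 by (simp add: chem_edge_types_def)

lemma sombor_lower_bound:
  "real n * sqrt 8 + 3/2 * real (nv V E 3) + 22/5 * real (nv V E 4) \<le> sombor E"
proof -
  have "3/2 * real (nv V E 3) + 22/5 * real (nv V E 4) =
      real (me E 1 2) * (-3/5) + real (me E 1 3) * (1/10) + real (me E 1 4) * (4/5)
      + real (me E 2 3) * (7/10) + real (me E 2 4) * (7/5) + real (me E 3 3) * (7/5)
      + real (me E 3 4) * (21/10) + real (me E 4 4) * (14/5)"
    using degree_counts_by_type leaves_eq me_1_1_eq_0 by linarith
  also have "\<dots> \<le> real (me E 1 2) * sombor_excess 1 2 + real (me E 1 3) * sombor_excess 1 3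
      + real (me E 1 4) * sombor_excess 1 4 + real (me E 2 3) * sombor_excess 2 3
      + real (me E 2 4) * sombor_excess 2 4 + real (me E 3 3) * sombor_excess 3 3
      + real (me E 3 4) * sombor_excess 3 4 + real (me E 4 4) * sombor_excess 4 4"
    using sombor_excess_lower_bounds by (intro add_mono mult_left_mono) auto
  finally show ?thesis
    using sombor_eq by linarith
qed

lemma alpha1_if_no_branching:
  assumes "nv V E 3 = 0" "nv V E 4 = 0"
  shows "alpha1 n V E"
proof -
  have zeros: "me E 1 2 = 0" "me E 1 3 = 0" "me E 1 4 = 0" "me E 2 3 = 0" "me E 2 4 = 0"
    "me E 3 3 = 0" "me E 3 4 = 0" "me E 4 4 = 0"
    using degree_counts_by_type leaves_eq assms by simp_all
  then have "me E 2 2 = n"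
    using card_edges_by_type card_edges me_1_1_eq_0 by simp
  moreover have "nv V E 2 = n"
    using order_eq_nv_sum leaves_eq assms by simp
  moreover have "others_zero E {(2, 2)}"
    using zeros me_1_1_eq_0 by (intro others_zeroI) (auto simp: chem_edge_types_def)
  ultimately show ?thesis
    using unicyclic by (simp add: alpha1_def)
qed

lemma alpha2_or_alpha3_if_one_branching:
  assumes "nv V E 3 = 1" "nv V E 4 = 0"
  shows "alpha2 n V E \<or> alpha3 n V E"
proof -
  have zeros: "me E 3 3 = 0" "me E 1 4 = 0" "me E 2 4 = 0" "me E 3 4 = 0" "me E 4 4 = 0"
    using me_diag_le_choose[of 3] degree_counts_by_type(4) assms by (simp_all add: binomial_eq_0)
  have leaf: "me E 1 2 + me E 1 3 = 1" and branch: "me E 1 3 + me E 2 3 = 3"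
    using degree_counts_by_type(1,3) leaves_eq assms me_1_1_eq_0 zeros by linarith+
  have edges: "n = me E 1 2 + me E 1 3 + me E 2 2 + me E 2 3"
    using card_edges_by_type card_edges me_1_1_eq_0 zeros by simp
  have vertices: "nv V E 1 = 1" "nv V E 2 = n - 2"
    using order_eq_nv_sum leaves_eq assms by simp_all
  show ?thesis
  proof (cases "me E 1 3 = 1")
    case True
    then have "me E 1 2 = 0" "me E 2 3 = 2" "me E 2 2 = n - 3"
      using leaf branch edges by linarith+
    moreover have "others_zero E {(1, 3), (2, 3), (2, 2)}"
      using zeros me_1_1_eq_0 calculation by (intro others_zeroI) (auto simp: chem_edge_types_def)
    ultimately have "alpha2 n V E"
      using unicyclic assms vertices True by (simp add: alpha2_def)
    then show ?thesis ..
  next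
    case False
    then have "me E 1 3 = 0" "me E 1 2 = 1" "me E 2 3 = 3" "me E 2 2 = n - 4"
      using leaf branch edges by linarith+
    moreover have "others_zero E {(1, 2), (2, 3), (2, 2)}"
      using zeros me_1_1_eq_0 calculation by (intro others_zeroI) (auto simp: chem_edge_types_def)
    ultimately have "alpha3 n V E"
      using unicyclic assms vertices by (simp add: alpha3_def)
    then show ?thesis ..
  qed
qed

lemma sombor_gt_alpha9_if_two_branching:
  assumes "nv V E 3 = 2" "nv V E 4 = 0" "\<not> alpha9 n V E"
  shows "real n * sqrt 8 + (2 * sombor_excess 1 2 + 4 * sombor_excess 2 3 + sombor_excess 3 3)
    < sombor E"
proof -
  have zeros: "me E 1 4 = 0" "me E 2 4 = 0" "me E 3 4 = 0" "me E 4 4 = 0"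
    using degree_counts_by_type(4) assms(2) by simp_all
  have "me E 3 3 \<le> 1"
    using me_diag_le_choose[of 3] assms(1) by simp
  have leaf: "me E 1 2 + me E 1 3 = 2" and branch: "me E 1 3 + me E 2 3 + 2 * me E 3 3 = 6"
    using degree_counts_by_type(1,3) leaves_eq assms me_1_1_eq_0 zeros by linarith+
  have leaf_at_branch: "me E 1 3 \<noteq> 0" if "me E 3 3 = 1"
  proof
    assume "me E 1 3 = 0"
    then have "me E 1 2 = 2" "me E 2 3 = 4" "me E 2 2 = n - 7"
      using that leaf branch card_edges_by_type card_edges me_1_1_eq_0 zeros by linarith+
    moreover have "others_zero E {(1, 2), (2, 3), (3, 3), (2, 2)}"
      using zeros me_1_1_eq_0 \<open>me E 1 3 = 0\<close> by (intro others_zeroI) (auto simp: chem_edge_types_def)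
    moreover have "nv V E 1 = 2" "nv V E 2 = n - 4"
      using order_eq_nv_sum leaves_eq assms by simp_all
    ultimately have "alpha9 n V E"
      using unicyclic assms that by (simp add: alpha9_def)
    then show False
      using assms(3) by contradiction
  qed
  let ?k = "real (me E 1 3)" and ?c = "real (me E 3 3)"
  have "real (me E 1 2) = 2 - ?k" "real (me E 2 3) = 6 - ?k - 2 * ?c"
    using leaf branch by linarith+
  then have "sombor E = real n * sqrt 8 + (2 - ?k) * sombor_excess 1 2 + ?k * sombor_excess 1 3
      + (6 - ?k - 2 * ?c) * sombor_excess 2 3 + ?c * sombor_excess 3 3"
    using sombor_eq zeros by simp
  then have "sombor E - (real n * sqrt 8 + (2 * sombor_excess 1 2 + 4 * sombor_excess 2 3 + sombor_excess 3 3))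
      = (1 - ?c) * (2 * sombor_excess 2 3 - sombor_excess 3 3)
        + ?k * (sombor_excess 1 3 - sombor_excess 1 2 - sombor_excess 2 3)"
    by (simp add: algebra_simps)
  moreover have "0 < (1 - ?c) * (2 * sombor_excess 2 3 - sombor_excess 3 3)
      + ?k * (sombor_excess 1 3 - sombor_excess 1 2 - sombor_excess 2 3)"
  proof (cases "me E 3 3 = 0")
    case True
    then show ?thesis
      using sombor_excess_comparisons(2,4) by (simp add: add_pos_nonneg)
  next
    case False
    then have "me E 3 3 = 1" "0 < me E 1 3"
      using \<open>me E 3 3 \<le> 1\<close> leaf_at_branch by auto
    then show ?thesis
      using sombor_excess_comparisons(2) by simp
  qed
  ultimately show ?thesis
    by linarith
qed

lemma sombor_gt_alpha9:
  assumes "\<not> alpha1 n V E" "\<not> alpha2 n V E" "\<not> alpha3 n V E" "\<not> alpha9 n V E"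
  shows "real n * sqrt 8 + (2 * sombor_excess 1 2 + 4 * sombor_excess 2 3 + sombor_excess 3 3)
    < sombor E"
proof -
  consider "1 \<le> nv V E 4 \<or> 3 \<le> nv V E 3" | "nv V E 3 = 0" "nv V E 4 = 0"
    | "nv V E 3 = 1" "nv V E 4 = 0" | "nv V E 3 = 2" "nv V E 4 = 0"
    by linarith
  then show ?thesis
  proof cases
    case 1
    then have "22/5 \<le> 3/2 * real (nv V E 3) + 22/5 * real (nv V E 4)"
      by auto
    then show ?thesis
      using sombor_lower_bound sombor_excess_comparisons(5) by linarith
  next
    case 2
    then show ?thesis
      using alpha1_if_no_branching assms(1) by blast
  next
    case 3
    then show ?thesis
      using alpha2_or_alpha3_if_one_branching assms(2,3) by blast
  next
    case 4
    then show ?thesis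
      using sombor_gt_alpha9_if_two_branching assms(4) by blast
  qed
qed

end

theorem theorem3p6:
  fixes n :: nat
    and V1 V2 V3 V4 V :: "'a set"
    and E1 E2 E3 E4 E :: "'a set set"
  assumes "n \<ge> 7"
    and "alpha1 n V1 E1"
    and "alpha3 n V2 E2"
    and "alpha2 n V3 E3"
    and "alpha9 n V4 E4"
    and "chem_unicyclic n V E"
    and "\<not> alpha1 n V E" and "\<not> alpha2 n V E" and "\<not> alpha3 n V E" and "\<not> alpha9 n V E"
  shows "sombor E1 < sombor E2 \<and> sombor E2 < sombor E3 \<and> sombor E3 < sombor E4
         \<and> sombor E4 < sombor E"
proof -
  interpret chemical_unicyclic_graph n V E
    using assms(1,6) by unfold_locales simp_all
  have "sombor E1 = real n * sqrt 8"
    using assms(2) by (rule sombor_alpha1)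
  moreover have "sombor E2 = real n * sqrt 8 + (sombor_excess 1 2 + 3 * sombor_excess 2 3)"
    using assms(3) by (rule sombor_alpha3)
  moreover have "sombor E3 = real n * sqrt 8 + (sombor_excess 1 3 + 2 * sombor_excess 2 3)"
    using assms(4) by (rule sombor_alpha2)
  moreover have "sombor E4 =
      real n * sqrt 8 + (2 * sombor_excess 1 2 + 4 * sombor_excess 2 3 + sombor_excess 3 3)"
    using assms(5) by (rule sombor_alpha9)
  moreover have "real n * sqrt 8 + (2 * sombor_excess 1 2 + 4 * sombor_excess 2 3 + sombor_excess 3 3)
      < sombor E"
    using assms(7-10) by (rule sombor_gt_alpha9)
  ultimately show ?thesis
    using sombor_excess_comparisons(1-3) by linarith
qed

end
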